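(* The function $\mathcal{O}:(0,\infty)^3\to\mathbb{R}$ is locally Lipschitz continuous on $(0,\infty)^3$.
   Context: For $(b_1,b_2,\beta)\in(0,\infty)^3$, $\mathcal{O}(b_1,b_2,\beta)=\inf\Big\{\frac{\int_{\mathbb{R}^2}(|\nabla u_1|^2+|\nabla u_2|^2)dx}{\frac{b_1}{2}\int|u_1|^4dx+\frac{b_2}{2}\int|u_2|^4dx+\beta\int|u_1|^2|u_2|^2dx}: u_i\in H^1(\mathbb{R}^2),\ \|u_i\|_2=1,\ i=1,2\Big\}$. *)

theory Defs
  imports "HOL-Analysis.Analysis"
begin

definition test_fun :: "(real^2 \<Rightarrow> real) \<Rightarrow> (real^2 \<Rightarrow> real^2) \<Rightarrow> bool" where
  "test_fun \<phi> d\<phi> \<longleftrightarrow>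
     (\<forall>x. (\<phi> has_derivative (\<lambda>h. d\<phi> x \<bullet> h)) (at x)) \<and>
     continuous_on UNIV d\<phi> \<and>
     compact (closure {x. \<phi> x \<noteq> 0})"

definition weak_gradient :: "(real^2 \<Rightarrow> real) \<Rightarrow> (real^2 \<Rightarrow> real^2) \<Rightarrow> bool" where
  "weak_gradient u g \<longleftrightarrow>
     (\<forall>\<phi> d\<phi>. test_fun \<phi> d\<phi> \<longrightarrow>
        (\<forall>i. (LINT x|lborel. u x * (d\<phi> x $ i)) = - (LINT x|lborel. (g x $ i) * \<phi> x)))"

definition H1_with_grad :: "(real^2 \<Rightarrow> real) \<Rightarrow> (real^2 \<Rightarrow> real^2) \<Rightarrow> bool" where
  "H1_with_grad u g \<longleftrightarrow>
     u \<in> borel_measurable lborel \<and> integrable lborel (\<lambda>x. (u x)\<^sup>2) \<and>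
     g \<in> borel_measurable lborel \<and> integrable lborel (\<lambda>x. (norm (g x))\<^sup>2) \<and>
     weak_gradient u g"

definition Ocal :: "real \<Rightarrow> real \<Rightarrow> real \<Rightarrow> real" where
  "Ocal b1 b2 \<beta> = Inf
     { ((LINT x|lborel. (norm (g1 x))\<^sup>2) + (LINT x|lborel. (norm (g2 x))\<^sup>2)) /
       (b1 / 2 * (LINT x|lborel. (u1 x) ^ 4) + b2 / 2 * (LINT x|lborel. (u2 x) ^ 4)
        + \<beta> * (LINT x|lborel. (u1 x)\<^sup>2 * (u2 x)\<^sup>2))
     | u1 g1 u2 g2. H1_with_grad u1 g1 \<and> H1_with_grad u2 g2 \<and>
         (LINT x|lborel. (u1 x)\<^sup>2) = 1 \<and> (LINT x|lborel. (u2 x)\<^sup>2) = 1 }"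

definition locally_lipschitz_on :: "'a::metric_space set \<Rightarrow> ('a \<Rightarrow> 'b::metric_space) \<Rightarrow> bool" where
  "locally_lipschitz_on S f \<longleftrightarrow>
     (\<forall>p\<in>S. \<exists>r>0. \<exists>L. L-lipschitz_on (cball p r \<inter> S) f)"

end

theory Submission
  imports Defs
begin

text \<open>For fixed admissible u1, u2 the quotient is N / (b \<bullet> w), where b = (b1, b2, \<beta>) and
  w = (\<integral>u1^4 / 2, \<integral>u2^4 / 2, \<integral>u1^2 u2^2) has nonnegative coordinates. If every coordinate of x
  and y is at least m > 0, then y \<bullet> w \<le> (1 + |x - y| / m) (x \<bullet> w), so each quotient, and hence
  their infimum \<O>, changes at most by the factor 1 + |x - y| / m between x and y. On the ball of
  radius m around a point p whose coordinates are at least 2m, \<O> is therefore bounded by 2 \<O>(p)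
  and Lipschitz with constant 2 \<O>(p) / m.\<close>

definition inf_quotient :: "(real \<times> 'a::euclidean_space) set \<Rightarrow> 'a \<Rightarrow> real" where
  "inf_quotient T x = (INF (N, w)\<in>T. N / (x \<bullet> w))"

lemma inner_le_scaled_inner:
  fixes x y w :: "'a::euclidean_space"
  assumes "m > 0" and x: "\<forall>i\<in>Basis. m \<le> x \<bullet> i" and w: "\<forall>i\<in>Basis. 0 \<le> w \<bullet> i"
  shows "y \<bullet> w \<le> (1 + dist x y / m) * (x \<bullet> w)"
proof -
  have "(y \<bullet> i) * (w \<bullet> i) \<le> ((1 + dist x y / m) * (x \<bullet> i)) * (w \<bullet> i)" if i: "i \<in> Basis" for i
  proof (rule mult_right_mono)
    have "y \<bullet> i \<le> x \<bullet> i + dist x y"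
      using Basis_le_norm[OF i, of "x - y"] by (simp add: dist_norm inner_diff_left)
    also have "dist x y \<le> dist x y / m * (x \<bullet> i)"
      using \<open>m > 0\<close> x i mult_left_mono[of m "x \<bullet> i" "dist x y"] by (simp add: field_simps)
    finally show "y \<bullet> i \<le> (1 + dist x y / m) * (x \<bullet> i)" by (simp add: algebra_simps)
  qed (use w i in auto)
  then have "(\<Sum>i\<in>Basis. (y \<bullet> i) * (w \<bullet> i)) \<le> (1 + dist x y / m) * (\<Sum>i\<in>Basis. (x \<bullet> i) * (w \<bullet> i))"
    by (simp add: sum_distrib_left sum_mono mult.assoc)
  then show ?thesis by (simp only: euclidean_inner[of y w] euclidean_inner[of x w])
qed

lemma inner_nonneg_Basis:
  fixes x w :: "'a::euclidean_space"
  assumes "0 \<le> m" "\<forall>i\<in>Basis. m \<le> x \<bullet> i" "\<forall>i\<in>Basis. 0 \<le> w \<bullet> i"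
  shows "0 \<le> x \<bullet> w"
proof -
  have "0 \<le> (x \<bullet> i) * (w \<bullet> i)" if "i \<in> Basis" for i
    using assms that by (meson mult_nonneg_nonneg order_trans)
  then show ?thesis by (simp only: euclidean_inner[of x w] sum_nonneg)
qed

lemma divide_inner_le_scaled:
  fixes x y w :: "'a::euclidean_space"
  assumes "m > 0" "N \<ge> 0"
    and x: "\<forall>i\<in>Basis. m \<le> x \<bullet> i" and y: "\<forall>i\<in>Basis. m \<le> y \<bullet> i" and w: "\<forall>i\<in>Basis. 0 \<le> w \<bullet> i"
  shows "N / (x \<bullet> w) \<le> (1 + dist x y / m) * (N / (y \<bullet> w))"
proof -
  let ?k = "1 + dist x y / m"
  have "?k > 0" using \<open>m > 0\<close> by (simp add: add_pos_nonneg)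
  have yx: "y \<bullet> w \<le> ?k * (x \<bullet> w)" by (rule inner_le_scaled_inner[OF \<open>m > 0\<close> x w])
  have xy: "x \<bullet> w \<le> ?k * (y \<bullet> w)"
    using inner_le_scaled_inner[OF \<open>m > 0\<close> y w, of x] by (simp add: dist_commute)
  have "x \<bullet> w \<ge> 0" "y \<bullet> w \<ge> 0"
    using inner_nonneg_Basis[OF less_imp_le[OF \<open>m > 0\<close>] x w]
      inner_nonneg_Basis[OF less_imp_le[OF \<open>m > 0\<close>] y w] by auto
  show ?thesis
  proof (cases "x \<bullet> w = 0")
    case True
    \<comment> \<open>the left-hand side is N / 0 = 0\<close>
    then show ?thesis using \<open>?k > 0\<close> \<open>N \<ge> 0\<close> \<open>y \<bullet> w \<ge> 0\<close> by simp
  next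
    case False
    then have "x \<bullet> w > 0" using \<open>x \<bullet> w \<ge> 0\<close> by simp
    moreover have "y \<bullet> w > 0"
      using \<open>x \<bullet> w > 0\<close> xy \<open>?k > 0\<close> \<open>y \<bullet> w \<ge> 0\<close> by (smt (verit) mult_nonneg_nonpos)
    ultimately show ?thesis
      using mult_left_mono[OF yx \<open>N \<ge> 0\<close>] by (simp add: field_simps)
  qed
qed

lemma Inf_image_le_scaled:
  fixes f g :: "'a \<Rightarrow> real"
  assumes "T \<noteq> {}" "k > 0" "\<forall>t\<in>T. 0 \<le> f t" "\<forall>t\<in>T. f t \<le> k * g t"
  shows "(INF t\<in>T. f t) \<le> k * (INF t\<in>T. g t)"
proof -
  have "bdd_below (f ` T)" using assms(3) by (intro bdd_belowI2) blast
  have "(INF t\<in>T. f t) / k \<le> g t" if "t \<in> T" for t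
  proof -
    have "(INF t\<in>T. f t) \<le> f t" by (rule cINF_lower[OF \<open>bdd_below (f ` T)\<close> that])
    also have "\<dots> \<le> k * g t" using assms(4) that by blast
    finally show ?thesis using \<open>k > 0\<close> by (simp add: divide_le_eq mult.commute)
  qed
  then have "(INF t\<in>T. f t) / k \<le> (INF t\<in>T. g t)"
    using assms(1) by (intro cINF_greatest) auto
  then show ?thesis using \<open>k > 0\<close> by (simp add: divide_le_eq mult.commute)
qed

lemma lipschitz_on_scaled_bound:
  fixes F :: "'a::metric_space \<Rightarrow> real"
  assumes "r > 0" "M \<ge> 0" and bound: "\<forall>y\<in>U. 0 \<le> F y \<and> F y \<le> M"
    and scaled: "\<forall>x\<in>U. \<forall>y\<in>U. F x \<le> (1 + dist x y / r) * F y"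
  shows "(M / r)-lipschitz_on U F"
proof (rule lipschitz_onI)
  have diff: "F x - F y \<le> M / r * dist x y" if "x \<in> U" "y \<in> U" for x y
  proof -
    have "F x - F y \<le> dist x y / r * F y" using scaled that by (simp add: algebra_simps)
    also have "\<dots> \<le> dist x y / r * M" using bound that \<open>r > 0\<close> by (intro mult_left_mono) auto
    finally show ?thesis by (simp add: field_simps)
  qed
  show "dist (F x) (F y) \<le> M / r * dist x y" if "x \<in> U" "y \<in> U" for x y
    using diff[OF that] diff[OF that(2,1)] by (simp add: dist_real_def dist_commute abs_le_iff)
  show "0 \<le> M / r" using assms(1,2) by simp
qed

lemma inf_quotient_nonneg:
  assumes "T \<noteq> {}" and T: "\<forall>(N, w)\<in>T. 0 \<le> N \<and> (\<forall>i\<in>Basis. 0 \<le> w \<bullet> i)"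
    and "m \<ge> 0" "\<forall>i\<in>Basis. m \<le> x \<bullet> i"
  shows "0 \<le> inf_quotient T x"
  using assms inner_nonneg_Basis[OF assms(3,4)] unfolding inf_quotient_def by (auto intro!: cINF_greatest)

lemma inf_quotient_le_scaled:
  assumes "T \<noteq> {}" and T: "\<forall>(N, w)\<in>T. 0 \<le> N \<and> (\<forall>i\<in>Basis. 0 \<le> w \<bullet> i)"
    and "m > 0" and x: "\<forall>i\<in>Basis. m \<le> x \<bullet> i" and y: "\<forall>i\<in>Basis. m \<le> y \<bullet> i"
  shows "inf_quotient T x \<le> (1 + dist x y / m) * inf_quotient T y"
proof -
  have "\<forall>(N, w)\<in>T. N / (x \<bullet> w) \<le> (1 + dist x y / m) * (N / (y \<bullet> w))"
    using T divide_inner_le_scaled[OF \<open>m > 0\<close> _ x y] by blast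
  moreover have "\<forall>(N, w)\<in>T. 0 \<le> N / (x \<bullet> w)"
    using T inner_nonneg_Basis[OF less_imp_le[OF \<open>m > 0\<close>] x] by auto
  ultimately show ?thesis
    unfolding inf_quotient_def using \<open>m > 0\<close> \<open>T \<noteq> {}\<close>
    by (intro Inf_image_le_scaled) (auto simp: add_pos_nonneg)
qed

lemma cball_in_orthant_bounded_below:
  fixes p :: "'a::euclidean_space"
  assumes "\<forall>i\<in>Basis. 0 < p \<bullet> i"
  obtains m where "m > 0" "\<And>x. x \<in> cball p m \<Longrightarrow> \<forall>i\<in>Basis. m \<le> x \<bullet> i"
proof
  define m where "m = Min ((\<lambda>i. p \<bullet> i) ` Basis) / 2"
  have "0 < Min ((\<lambda>i. p \<bullet> i) ` Basis)"
    using assms by (subst Min_gr_iff) auto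
  then show "m > 0" unfolding m_def by simp
  fix x assume "x \<in> cball p m"
  show "\<forall>i\<in>Basis. m \<le> x \<bullet> i"
  proof
    fix i :: 'a assume i: "i \<in> Basis"
    have "p \<bullet> i - x \<bullet> i \<le> m"
      using Basis_le_norm[OF i, of "p - x"] \<open>x \<in> cball p m\<close> by (simp add: dist_norm inner_diff_left)
    moreover have "2 * m \<le> p \<bullet> i" using i unfolding m_def by simp
    ultimately show "m \<le> x \<bullet> i" by linarith
  qed
qed

lemma inf_quotient_locally_lipschitz:
  fixes T :: "(real \<times> 'a::euclidean_space) set"
  assumes T: "\<forall>(N, w)\<in>T. 0 \<le> N \<and> (\<forall>i\<in>Basis. 0 \<le> w \<bullet> i)"
  shows "locally_lipschitz_on {x. \<forall>i\<in>Basis. 0 < x \<bullet> i} (inf_quotient T)"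
proof (cases "T = {}")
  case True
  \<comment> \<open>then inf_quotient T is constantly Inf {}, an unspecified real\<close>
  then have "inf_quotient T = (\<lambda>x. Inf {})" by (simp add: inf_quotient_def fun_eq_iff)
  then show ?thesis
    unfolding locally_lipschitz_on_def using lipschitz_on_constant zero_less_one by metis
next
  case False
  show ?thesis
    unfolding locally_lipschitz_on_def
  proof
    fix p :: 'a assume "p \<in> {x. \<forall>i\<in>Basis. 0 < x \<bullet> i}"
    then obtain m where "m > 0" and ball_ge: "\<And>x. x \<in> cball p m \<Longrightarrow> \<forall>i\<in>Basis. m \<le> x \<bullet> i"
      using cball_in_orthant_bounded_below by blast
    let ?F = "inf_quotient T"
    have scaled: "\<forall>x\<in>cball p m. \<forall>y\<in>cball p m. ?F x \<le> (1 + dist x y / m) * ?F y"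
      using inf_quotient_le_scaled[OF False T \<open>m > 0\<close>] ball_ge by blast
    have "p \<in> cball p m" using \<open>m > 0\<close> by simp
    have nonneg: "0 \<le> ?F x" if "x \<in> cball p m" for x
      using inf_quotient_nonneg[OF False T less_imp_le[OF \<open>m > 0\<close>] ball_ge[OF that]] .
    have bounded: "?F y \<le> 2 * ?F p" if "y \<in> cball p m" for y
    proof -
      have "?F y \<le> (1 + dist y p / m) * ?F p"
        using scaled that \<open>p \<in> cball p m\<close> by blast
      also have "\<dots> \<le> 2 * ?F p"
        using that nonneg[OF \<open>p \<in> cball p m\<close>] \<open>m > 0\<close>
        by (intro mult_right_mono) (auto simp: dist_commute field_simps)
      finally show ?thesis .
    qed
    have "(2 * ?F p / m)-lipschitz_on (cball p m) ?F"
      using \<open>m > 0\<close> nonneg[OF \<open>p \<in> cball p m\<close>] nonneg bounded scaled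
      by (intro lipschitz_on_scaled_bound) auto
    then show "\<exists>r>0. \<exists>L. L-lipschitz_on (cball p r \<inter> {x. \<forall>i\<in>Basis. 0 < x \<bullet> i}) ?F"
      using \<open>m > 0\<close> lipschitz_on_subset[of _ "cball p m"] by blast
  qed
qed

lemma positive_orthant_real3:
  "{0<..} \<times> {0<..} \<times> {0<..} = {x :: real \<times> real \<times> real. \<forall>i\<in>Basis. 0 < x \<bullet> i}"
  by (auto simp: Basis_prod_def)

lemma Ocal_eq_inf_quotient:
  "Ocal b1 b2 \<beta> = inf_quotient
     ((\<lambda>(u1, g1, u2, g2).
        ((LINT x|lborel. (norm (g1 x))\<^sup>2) + (LINT x|lborel. (norm (g2 x))\<^sup>2),
         (LINT x|lborel. (u1 x) ^ 4) / 2, (LINT x|lborel. (u2 x) ^ 4) / 2,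
         LINT x|lborel. (u1 x)\<^sup>2 * (u2 x)\<^sup>2))
      ` {(u1, g1, u2, g2). H1_with_grad u1 g1 \<and> H1_with_grad u2 g2 \<and>
          (LINT x|lborel. (u1 x)\<^sup>2) = 1 \<and> (LINT x|lborel. (u2 x)\<^sup>2) = 1})
     (b1, b2, \<beta>)"
  unfolding Ocal_def inf_quotient_def image_image
  by (rule arg_cong[where f = Inf]) (auto simp: image_def add.assoc)

theorem lemma2p2:
  shows "locally_lipschitz_on ({0<..} \<times> {0<..} \<times> {0<..})
           (\<lambda>(b1, b2, \<beta>). Ocal b1 b2 \<beta>)"
proof -
  have fourth_power_nonneg: "0 \<le> (r :: real) ^ 4" for r
    by (simp add: zero_le_even_power)
  show ?thesis
    unfolding positive_orthant_real3 Ocal_eq_inf_quotient case_prod_beta' prod.collapse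
    by (rule inf_quotient_locally_lipschitz)
       (auto simp: Basis_prod_def fourth_power_nonneg intro!: add_nonneg_nonneg integral_nonneg_AE)
qed

end
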